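(* The group $\mathbb{Z}^\omega$ is the union of a Haar null set and a Haar meager set.
   Context: $\mathbb{Z}^\omega$ is the abelian Polish group of all integer sequences with coordinatewise addition and the product topology (discrete topology on $\mathbb{Z}$). For an abelian Polish group $G$: a set $A\subseteq G$ is Haar null if there exist a Borel set $B\supseteq A$ and a Borel probability measure $\mu$ on $G$ with $\mu(x+B)=0$ for every $x\in G$; a set $A\subseteq G$ is Haar meager if there exist a Borel set $B\supseteq A$, a compact metric space $K$ and a continuous map $f\colon K\to G$ such that $f^{-1}(x+B)$ is meager in $K$ for every $x\in G$. *)

theory Defs
  imports "HOL-Analysis.Analysis" "HOL-Probability.Probability"
begin

text \<open>The group Z^omega: integer sequences, coordinatewise addition, product topology
  (the product of the discrete topology on int, which is the library's instance
  for the function type nat => int).\<close>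
type_synonym zw = "nat \<Rightarrow> int"

definition zw_translate :: "zw \<Rightarrow> zw set \<Rightarrow> zw set" where
  "zw_translate x B = (\<lambda>y. (\<lambda>n. x n + y n)) ` B"

definition nowhere_dense_in :: "'a topology \<Rightarrow> 'a set \<Rightarrow> bool" where
  "nowhere_dense_in X S \<longleftrightarrow> S \<subseteq> topspace X \<and> X interior_of (X closure_of S) = {}"

definition meager_in :: "'a topology \<Rightarrow> 'a set \<Rightarrow> bool" where
  "meager_in X S \<longleftrightarrow> S \<subseteq> topspace X \<and>
     (\<exists>F :: nat \<Rightarrow> 'a set. (\<forall>n. nowhere_dense_in X (F n)) \<and> S \<subseteq> (\<Union>n. F n))"

definition haar_null :: "zw set \<Rightarrow> bool" where
  "haar_null A \<longleftrightarrow> (\<exists>B \<in> sets (borel :: zw measure). A \<subseteq> B \<and>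
     (\<exists>\<mu> :: zw measure. sets \<mu> = sets borel \<and> prob_space \<mu> \<and>
        (\<forall>x. emeasure \<mu> (zw_translate x B) = 0)))"

text \<open>Compact metric spaces K are represented as compact subsets of the
  metrizable space nat => real with the product topology (every compact metric
  space embeds into the Hilbert cube [0,1]^omega).\<close>
definition haar_meager :: "zw set \<Rightarrow> bool" where
  "haar_meager A \<longleftrightarrow> (\<exists>B \<in> sets (borel :: zw measure). A \<subseteq> B \<and>
     (\<exists>(K :: (nat \<Rightarrow> real) set) (f :: (nat \<Rightarrow> real) \<Rightarrow> zw).
        K \<noteq> {} \<and> compact K \<and> continuous_on K f \<and>
        (\<forall>x. meager_in (top_of_set K) {k \<in> K. f k \<in> zw_translate x B})))"

end

theory Submission
  imports Defs
begin

text \<open>Fix moduli \<open>q n = 2^n\<close> and let \<open>C\<close> be the set of sequences \<open>z\<close> with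
  \<open>q n dvd z n\<close> for infinitely many \<open>n\<close>; every translate of \<open>C\<close> has the same form.
  Under the product of the uniform distributions on \<open>{0..<q n}\<close> the \<open>n\<close>-th
  congruence holds with probability \<open>1/q n\<close>, so by Borel--Cantelli every translate
  of \<open>C\<close> is null. Under the map \<open>\<lfloor>_\<rfloor>\<close> from the compact cube \<open>\<Pi>\<^sub>n {0..<q n}\<close>, a
  translate of the complement of \<open>C\<close> pulls back to the union over \<open>m\<close> of the
  closed sets where all congruences beyond \<open>m\<close> fail; these are nowhere dense, since
  resetting a single late coordinate is a small move that restores a congruence.\<close>

definition infinitely_often_congruent :: "(nat \<Rightarrow> int) \<Rightarrow> zw \<Rightarrow> zw set" where
  "infinitely_often_congruent q c = {z. \<exists>\<^sub>F n in sequentially. q n dvd z n - c n}"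

lemma zw_translate_eq: "zw_translate x B = {z. (\<lambda>n. z n - x n) \<in> B}"
  unfolding zw_translate_def by (auto intro: image_eqI[where x = "\<lambda>n. _ n - x n"])

lemma zw_translate_Compl: "zw_translate x (- B) = - zw_translate x B"
  by (simp add: zw_translate_eq Collect_neg_eq)

lemma zw_translate_infinitely_often_congruent:
  "zw_translate x (infinitely_often_congruent q c) = infinitely_often_congruent q (\<lambda>n. x n + c n)"
  by (simp add: zw_translate_eq infinitely_often_congruent_def diff_diff_eq)

lemma infinitely_often_congruent_eq_limsup:
  "infinitely_often_congruent q c = limsup (\<lambda>n. {z. q n dvd z n - c n})"
  by (auto simp: infinitely_often_congruent_def limsup_INF_SUP frequently_sequentially)

lemma open_coordinate_preimage: "open {z :: 'a \<Rightarrow> 'b::topological_space. z n \<in> A}" if "open A"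
  using open_vimage[OF that continuous_on_product_coordinates] by (simp add: vimage_def)

lemma congruent_coordinate_borel: "{z :: zw. q dvd z n - c} \<in> sets borel"
  using open_coordinate_preimage[OF discrete_topology_class.open_discrete, of n "{a. q dvd a - c}"]
  by (intro borel_open) simp

lemma infinitely_often_congruent_borel: "infinitely_often_congruent q c \<in> sets borel"
  unfolding infinitely_often_congruent_eq_limsup
  by (intro measurable_limsup congruent_coordinate_borel)

text \<open>Needed to identify the Borel sets of \<open>zw\<close> with the product \<open>\<sigma>\<close>-algebra.\<close>
instance int :: second_countable_topology
proof
  have "generate_topology (range (\<lambda>i::int. {i})) S" for S
  proof -
    have "generate_topology (range (\<lambda>i. {i})) (\<Union>i\<in>S. {i})"
      by (intro generate_topology.UN) (auto intro: generate_topology.Basis)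
    then show ?thesis by simp
  qed
  then have "open = generate_topology (range (\<lambda>i::int. {i}))"
    using discrete_topology_class.open_discrete by (intro ext iffI) auto
  then show "\<exists>B::int set set. countable B \<and> open = generate_topology B"
    by (intro exI[of _ "range (\<lambda>i::int. {i})"]) simp
qed

lemma sets_borel_int: "sets (borel :: int measure) = UNIV"
  using borel_open[OF discrete_topology_class.open_discrete] by blast

definition uniform_residues :: "(nat \<Rightarrow> int) \<Rightarrow> zw measure" where
  "uniform_residues q = (\<Pi>\<^sub>M n\<in>UNIV. measure_pmf (pmf_of_set {0..<q n}))"

lemma sets_uniform_residues: "sets (uniform_residues q) = sets borel"
  unfolding uniform_residues_def sets_PiM_equal_borel[symmetric]
  by (intro sets_PiM_cong) (simp_all add: sets_borel_int)

lemma prob_space_uniform_residues: "prob_space (uniform_residues q)"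
  unfolding uniform_residues_def
  by (intro prob_space_PiM prob_space_measure_pmf)

lemma atLeastLessThan_inter_residue_class:
  fixes q c :: int
  assumes "q > 0"
  shows "{0..<q} \<inter> {a. q dvd a - c} = {c mod q}"
proof (intro set_eqI iffI)
  fix a assume "a \<in> {0..<q} \<inter> {a. q dvd a - c}"
  then show "a \<in> {c mod q}"
    by (metis IntD1 IntD2 atLeastLessThan_iff mem_Collect_eq mod_eq_dvd_iff mod_pos_pos_trivial singleton_iff)
qed (use assms in \<open>auto simp: mod_eq_dvd_iff[symmetric]\<close>)

lemma measure_uniform_residues_congruent:
  assumes "q n > 0"
  shows "measure (uniform_residues q) {z. q n dvd z n - c} = 1 / q n"
proof -
  interpret product_prob_space "\<lambda>n. measure_pmf (pmf_of_set {0..<q n})" UNIV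
    by unfold_locales
  have "measure (uniform_residues q) {z. q n dvd z n - c}
      = measure (pmf_of_set {0..<q n}) {a. q n dvd a - c}"
    using emeasure_PiM_Collect_single[of n "{a. q n dvd a - c}"]
    by (simp add: uniform_residues_def measure_def space_PiM)
  also have "\<dots> = 1 / q n"
    using assms by (simp add: measure_pmf_of_set atLeastLessThan_inter_residue_class)
  finally show ?thesis .
qed

lemma haar_null_infinitely_often_congruent:
  assumes pos: "\<And>n. q n > 0" and summable: "summable (\<lambda>n. 1 / q n)"
  shows "haar_null (infinitely_often_congruent q c)"
  unfolding haar_null_def
proof (intro bexI conjI exI allI)
  interpret prob_space "uniform_residues q"
    by (rule prob_space_uniform_residues)
  fix x
  let ?A = "\<lambda>n. {z. q n dvd z n - (x n + c n)}"
  have "limsup ?A \<in> null_sets (uniform_residues q)"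
  proof (rule borel_cantelli_limsup1)
    show "?A n \<in> sets (uniform_residues q)" for n
      by (simp add: sets_uniform_residues congruent_coordinate_borel)
    show "summable (\<lambda>n. measure (uniform_residues q) (?A n))"
      using summable by (simp add: measure_uniform_residues_congruent pos)
  qed (simp add: emeasure_eq_measure)
  then show "emeasure (uniform_residues q) (zw_translate x (infinitely_often_congruent q c)) = 0"
    by (subst zw_translate_infinitely_often_congruent)
      (simp add: infinitely_often_congruent_eq_limsup null_setsD1)
qed (auto simp: sets_uniform_residues infinitely_often_congruent_borel prob_space_uniform_residues)

lemma nowhere_dense_in_closedin:
  assumes "closedin X S" "X interior_of S = {}"
  shows "nowhere_dense_in X S"
  using assms by (simp add: nowhere_dense_in_def closure_of_closedin closedin_subset)

lemma interior_of_PiE_eq_empty: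
  fixes F :: "(nat \<Rightarrow> 'a::topological_space) set"
  assumes escape: "\<And>k N. k \<in> F \<Longrightarrow> \<exists>j\<ge>N. \<exists>a\<in>S j. k(j := a) \<notin> F"
  shows "top_of_set (\<Pi>\<^sub>E n\<in>UNIV. S n) interior_of F = {}"
proof (rule ccontr)
  let ?K = "\<Pi>\<^sub>E n\<in>UNIV. S n"
  assume "top_of_set ?K interior_of F \<noteq> {}"
  then obtain k V where V: "open V" "k \<in> ?K \<inter> V" "?K \<inter> V \<subseteq> F"
    unfolding interior_of_def openin_open by blast
  then obtain j a where j: "\<And>N. j N \<ge> N" "\<And>N. a N \<in> S (j N)" "\<And>N. k(j N := a N) \<notin> F"
    using escape by (metis IntD1 IntD2 subsetD)
  have "limitin (product_topology (\<lambda>i. euclidean) UNIV) (\<lambda>N. k(j N := a N)) k sequentially"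
    unfolding limitin_componentwise
  proof (intro conjI ballI)
    fix i
    have "eventually (\<lambda>N. (k(j N := a N)) i = k i) sequentially"
      unfolding eventually_sequentially by (metis fun_upd_other j(1) not_less_eq_eq)
    then show "limitin euclidean (\<lambda>N. (k(j N := a N)) i) (k i) sequentially"
      by (simp add: tendsto_eventually)
  qed auto
  then have "eventually (\<lambda>N. k(j N := a N) \<in> V) sequentially"
    using V by (intro topological_tendstoD) (auto simp: euclidean_product_topology)
  then obtain N where "k(j N := a N) \<in> V"
    unfolding eventually_sequentially by blast
  moreover have "k(j N := a N) \<in> ?K"
    using V(2) j(2) by (auto simp: PiE_iff)
  ultimately show False
    using V(3) j(3) by blast
qed

definition residue_cube :: "(nat \<Rightarrow> int) \<Rightarrow> (nat \<Rightarrow> real) set" where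
  "residue_cube q = (\<Pi>\<^sub>E n\<in>UNIV. real_of_int ` {0..<q n})"

lemma compact_residue_cube: "compact (residue_cube q)"
proof -
  have "compactin (product_topology (\<lambda>i. euclidean) UNIV) (residue_cube q)"
    unfolding residue_cube_def by (subst compactin_PiE) (auto intro: finite_imp_compact)
  then show ?thesis
    by (simp add: euclidean_product_topology)
qed

lemma residue_cube_nonempty:
  assumes "\<And>n. q n > 0"
  shows "residue_cube q \<noteq> {}"
  using assms by (auto simp: residue_cube_def PiE_eq_empty_iff)

lemma continuous_on_residue_cube_floor: "continuous_on (residue_cube q) (\<lambda>k n. \<lfloor>k n\<rfloor>)"
proof (rule continuous_on_coordinatewise_then_product)
  fix n
  have "continuous_on (real_of_int ` {0..<q n}) floor"
    by (rule continuous_on_finite) simp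
  moreover have "(\<lambda>k. k n) ` residue_cube q \<subseteq> real_of_int ` {0..<q n}"
    by (auto simp: residue_cube_def)
  ultimately show "continuous_on (residue_cube q) (\<lambda>k. \<lfloor>k n\<rfloor>)"
    by (rule continuous_on_compose2[OF _ continuous_on_product_then_coordinatewise[OF continuous_on_id]])
qed

lemma meager_in_residue_cube_eventually_incongruent:
  assumes pos: "\<And>n. q n > 0"
  shows "meager_in (top_of_set (residue_cube q))
           {k \<in> residue_cube q. \<forall>\<^sub>F n in sequentially. \<not> q n dvd \<lfloor>k n\<rfloor> - d n}"
  unfolding meager_in_def
proof (intro conjI exI allI)
  let ?K = "residue_cube q"
  define F where "F m = {k \<in> ?K. \<forall>n\<ge>m. \<not> q n dvd \<lfloor>k n\<rfloor> - d n}" for m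
  show "{k \<in> ?K. \<forall>\<^sub>F n in sequentially. \<not> q n dvd \<lfloor>k n\<rfloor> - d n} \<subseteq> (\<Union>m. F m)"
    by (auto simp: F_def eventually_sequentially)
  fix m
  have "F m = (\<Inter>n\<in>{m..}. ?K \<inter> (\<lambda>k. \<lfloor>k n\<rfloor>) -` {a. \<not> q n dvd a - d n})"
    by (auto simp: F_def)
  also have "closedin (top_of_set ?K) \<dots>"
  proof (intro closedin_INT continuous_closedin_preimage)
    show "continuous_on ?K (\<lambda>k. \<lfloor>k n\<rfloor>)" for n
      using continuous_on_product_then_coordinatewise[OF continuous_on_residue_cube_floor] by simp
    show "closed {a :: int. \<not> q n dvd a - d n}" for n
      unfolding closed_def by (rule discrete_topology_class.open_discrete)
  qed auto
  moreover have "top_of_set ?K interior_of F m = {}"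
    unfolding residue_cube_def
  proof (rule interior_of_PiE_eq_empty)
    fix k N assume "k \<in> F m"
    let ?j = "max N m"
    have "real_of_int (d ?j mod q ?j) \<in> real_of_int ` {0..<q ?j}"
      using pos[of ?j] by simp
    moreover have "k(?j := real_of_int (d ?j mod q ?j)) \<notin> F m"
      by (auto simp: F_def mod_eq_dvd_iff[symmetric] intro!: exI[of _ ?j])
    ultimately show "\<exists>j\<ge>N. \<exists>a\<in>real_of_int ` {0..<q j}. k(j := a) \<notin> F m"
      by (intro exI[of _ ?j]) auto
  qed
  ultimately show "nowhere_dense_in (top_of_set ?K) (F m)"
    by (intro nowhere_dense_in_closedin) simp_all
qed simp

lemma haar_meager_Compl_infinitely_often_congruent:
  assumes pos: "\<And>n. q n > 0"
  shows "haar_meager (- infinitely_often_congruent q c)"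
  unfolding haar_meager_def
proof (intro bexI conjI exI allI)
  show "- infinitely_often_congruent q c \<in> sets borel"
    using sets.compl_sets[OF infinitely_often_congruent_borel] by (simp add: Compl_eq_Diff_UNIV)
  fix x
  have "{k \<in> residue_cube q. (\<lambda>n. \<lfloor>k n\<rfloor>) \<in> zw_translate x (- infinitely_often_congruent q c)}
      = {k \<in> residue_cube q. \<forall>\<^sub>F n in sequentially. \<not> q n dvd \<lfloor>k n\<rfloor> - (x n + c n)}"
    unfolding zw_translate_Compl zw_translate_infinitely_often_congruent
    by (simp add: infinitely_often_congruent_def not_frequently)
  then show "meager_in (top_of_set (residue_cube q))
      {k \<in> residue_cube q. (\<lambda>n. \<lfloor>k n\<rfloor>) \<in> zw_translate x (- infinitely_often_congruent q c)}"
    using meager_in_residue_cube_eventually_incongruent[OF pos] by simp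
qed (simp_all add: residue_cube_nonempty pos compact_residue_cube continuous_on_residue_cube_floor)

theorem mainTheorem14:
  shows "\<exists>N M :: zw set. N \<union> M = UNIV \<and> haar_null N \<and> haar_meager M"
proof (intro exI conjI)
  let ?q = "\<lambda>n. 2 ^ n :: int"
  have "summable (\<lambda>n. 1 / real_of_int (?q n))"
    by (simp add: power_one_over[symmetric] summable_geometric)
  then show "haar_null (infinitely_often_congruent ?q (\<lambda>_. 0))"
    by (intro haar_null_infinitely_often_congruent) simp_all
  show "haar_meager (- infinitely_often_congruent ?q (\<lambda>_. 0))"
    by (intro haar_meager_Compl_infinitely_often_congruent) simp
qed simp

end
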